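(* Let $\textup{Sav}_{312}(z)=\sum_{n\ge0}\textup{Sav}_n(312)z^n$ (with $\textup{Sav}_0(312)=1$). Then \[\textup{Sav}_{312}(z)=\frac{-z^3+z^2+z-1}{z^4-2z^3+z^2+2z-1}.\] In particular, $\textup{Sav}_{312}(z)=1/(1-B(z))$ where $B(z)=z+\sum_{n\ge2}\lfloor n/2\rfloor z^n=\frac{z^4-z^3+z}{(z-1)^2(z+1)}$ is the generating function of strongly 312-avoiding permutations ending in the entry $1$.
   Context: Permutations are written in one-line notation $p=p_1\cdots p_n$ with $p_i=p(i)$. $p$ contains a pattern $q=q_1\cdots q_m$ if there are indices $i_1<\cdots<i_m$ with $p_{i_r}<p_{i_s}$ iff $q_r<q_s$; otherwise $p$ avoids $q$. $p^2(i)=p(p(i))$. A permutation $p$ is strongly $q$-avoiding if both $p$ and $p^2$ avoid $q$, and $\textup{Sav}_n(q)$ is the number of strongly $q$-avoiding permutations of length $n$. *)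

theory Defs
  imports "HOL-Combinatorics.Permutations" "HOL-Computational_Algebra.Formal_Power_Series"
begin

text \<open>Permutations of length n are bijections p of {1..n} (p permutes {1..n}), with
  one-line notation p(1) ... p(n). A pattern q of length m is given likewise on {1..m}.\<close>

definition contains :: "(nat \<Rightarrow> nat) \<Rightarrow> nat \<Rightarrow> (nat \<Rightarrow> nat) \<Rightarrow> nat \<Rightarrow> bool" where
  "contains p n q m \<longleftrightarrow>
     (\<exists>ix :: nat \<Rightarrow> nat.
        (\<forall>r\<in>{1..m}. ix r \<in> {1..n}) \<and>
        (\<forall>r\<in>{1..m}. \<forall>s\<in>{1..m}. r < s \<longrightarrow> ix r < ix s) \<and>
        (\<forall>r\<in>{1..m}. \<forall>s\<in>{1..m}. p (ix r) < p (ix s) \<longleftrightarrow> q r < q s))"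

definition avoids :: "(nat \<Rightarrow> nat) \<Rightarrow> nat \<Rightarrow> (nat \<Rightarrow> nat) \<Rightarrow> nat \<Rightarrow> bool" where
  "avoids p n q m \<longleftrightarrow> \<not> contains p n q m"

definition strongly_avoids :: "(nat \<Rightarrow> nat) \<Rightarrow> nat \<Rightarrow> (nat \<Rightarrow> nat) \<Rightarrow> nat \<Rightarrow> bool" where
  "strongly_avoids p n q m \<longleftrightarrow> avoids p n q m \<and> avoids (p \<circ> p) n q m"

definition pat312 :: "nat \<Rightarrow> nat" where
  "pat312 i = (if i = 1 then 3 else if i = 2 then 1 else if i = 3 then 2 else i)"

definition Sav :: "nat \<Rightarrow> (nat \<Rightarrow> nat) \<Rightarrow> nat \<Rightarrow> nat" where
  "Sav n q m = card {p. p permutes {1..n} \<and> strongly_avoids p n q m}"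

definition Sav_end1 :: "nat \<Rightarrow> (nat \<Rightarrow> nat) \<Rightarrow> nat \<Rightarrow> nat" where
  "Sav_end1 n q m = card {p. p permutes {1..n} \<and> strongly_avoids p n q m \<and> p n = 1}"

end

theory Submission
  imports Defs
begin

unbundle fps_syntax

text \<open>If a strongly 312-avoiding permutation p of length n has p(k) = 1, then every entry
  left of position k is smaller than every entry right of it (otherwise the two entries together
  with the 1 form a 312), so p is the direct sum of a strongly 312-avoiding permutation of
  length k ending in 1 and an arbitrary strongly 312-avoiding permutation of length n - k;
  squaring respects direct sums. Hence Sav(z) = 1 + B(z) Sav(z). A strongly 312-avoiding
  permutation of length n \<ge> 2 ending in 1 must be (n-j+1, ..., n, n-j, ..., 1) with 2j \<le> n,
  which gives the coefficients \<lfloor>n/2\<rfloor> of B; the rest is algebra.\<close>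

definition avoids_312 :: "(nat \<Rightarrow> nat) \<Rightarrow> nat \<Rightarrow> bool" where
  "avoids_312 p n \<longleftrightarrow>
     (\<forall>a b c. 1 \<le> a \<longrightarrow> a < b \<longrightarrow> b < c \<longrightarrow> c \<le> n \<longrightarrow> \<not> (p b < p c \<and> p c < p a))"

lemma avoids_312D:
  "avoids_312 p n \<Longrightarrow> 1 \<le> a \<Longrightarrow> a < b \<Longrightarrow> b < c \<Longrightarrow> c \<le> n \<Longrightarrow> p b < p c \<Longrightarrow> p c < p a
    \<Longrightarrow> False"
  unfolding avoids_312_def by blast

lemma contains_pat312_iff: "contains p n pat312 3 \<longleftrightarrow> \<not> avoids_312 p n"
proof
  have three: "{1..3::nat} = {1, 2, 3}" by auto
  assume "contains p n pat312 3"
  then obtain ix where range: "\<forall>r\<in>{1..3}. ix r \<in> {1..n}"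
    and mono: "\<forall>r\<in>{1..3}. \<forall>s\<in>{1..3}. r < s \<longrightarrow> ix r < ix s"
    and order: "\<forall>r\<in>{1..3}. \<forall>s\<in>{1..3}. p (ix r) < p (ix s) \<longleftrightarrow> pat312 r < pat312 s"
    unfolding contains_def by blast
  have "1 \<le> ix 1" "ix 1 < ix 2" "ix 2 < ix 3" "ix 3 \<le> n"
    using range mono by (auto simp: three)
  moreover have "p (ix 2) < p (ix 3)" "p (ix 3) < p (ix 1)"
    using order by (auto simp: three pat312_def)
  ultimately show "\<not> avoids_312 p n" unfolding avoids_312_def by blast
next
  have three: "{1..3::nat} = {1, 2, 3}" by auto
  assume "\<not> avoids_312 p n"
  then obtain a b c where abc: "1 \<le> a" "a < b" "b < c" "c \<le> n" "p b < p c" "p c < p a"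
    unfolding avoids_312_def by blast
  define ix where "ix r = (if r = 1 then a else if r = 2 then b else c)" for r :: nat
  have "(\<forall>r\<in>{1..3}. ix r \<in> {1..n}) \<and>
        (\<forall>r\<in>{1..3}. \<forall>s\<in>{1..3}. r < s \<longrightarrow> ix r < ix s) \<and>
        (\<forall>r\<in>{1..3}. \<forall>s\<in>{1..3}. p (ix r) < p (ix s) \<longleftrightarrow> pat312 r < pat312 s)"
    using abc by (auto simp: three pat312_def ix_def)
  then show "contains p n pat312 3" unfolding contains_def by blast
qed

lemma strongly_avoids_pat312_iff:
  "strongly_avoids p n pat312 3 \<longleftrightarrow> avoids_312 p n \<and> avoids_312 (p \<circ> p) n"
  unfolding strongly_avoids_def avoids_def contains_pat312_iff by simp

lemma avoids_312_prefix:
  assumes "avoids_312 p n" "k \<le> n" "\<And>i. 1 \<le> i \<Longrightarrow> i \<le> k \<Longrightarrow> u i = p i"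
  shows "avoids_312 u k"
  unfolding avoids_312_def
proof (intro allI impI notI)
  fix a b c assume "1 \<le> a" "a < b" "b < c" "c \<le> k" "u b < u c \<and> u c < u a"
  then show False
    using avoids_312D[OF assms(1), of a b c] assms(2) assms(3)[of a] assms(3)[of b] assms(3)[of c]
    by auto
qed

lemma avoids_312_shift:
  assumes "avoids_312 p n" "\<And>i. 1 \<le> i \<Longrightarrow> i \<le> n - k \<Longrightarrow> v i + k = p (i + k)"
  shows "avoids_312 v (n - k)"
  unfolding avoids_312_def
proof (intro allI impI notI)
  fix a b c assume abc: "1 \<le> a" "a < b" "b < c" "c \<le> n - k" "v b < v c \<and> v c < v a"
  then have "p (b + k) < p (c + k)" "p (c + k) < p (a + k)" "c + k \<le> n"
    using assms(2)[of a] assms(2)[of b] assms(2)[of c] by auto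
  then show False using avoids_312D[OF assms(1), of "a + k" "b + k" "c + k"] abc by auto
qed

lemma avoids_312_direct_sum:
  assumes "avoids_312 u k" "avoids_312 v m"
    and left: "\<And>i. 1 \<le> i \<Longrightarrow> i \<le> k \<Longrightarrow> h i = u i \<and> u i \<le> k"
    and right: "\<And>i. 1 \<le> i \<Longrightarrow> i \<le> m \<Longrightarrow> h (i + k) = v i + k \<and> 1 \<le> v i"
  shows "avoids_312 h (k + m)"
  unfolding avoids_312_def
proof (intro allI impI notI)
  fix a b c assume abc: "1 \<le> a" "a < b" "b < c" "c \<le> k + m" "h b < h c \<and> h c < h a"
  consider "c \<le> k" | "k < a" | "a \<le> k" "k < c" by linarith
  then show False
  proof cases
    case 1
    then show False
      using avoids_312D[OF assms(1), of a b c] abc left[of a] left[of b] left[of c] by auto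
  next
    case 2
    have "h a = v (a - k) + k" "h b = v (b - k) + k" "h c = v (c - k) + k"
      using right[of "a - k"] right[of "b - k"] right[of "c - k"] 2 abc by auto
    moreover have "1 \<le> a - k" "a - k < b - k" "b - k < c - k" "c - k \<le> m" using 2 abc by auto
    ultimately show False using avoids_312D[OF assms(2), of "a - k" "b - k" "c - k"] 2 abc by auto
  next
    case 3
    have "h a \<le> k" using left[of a] abc 3 by auto
    moreover have "1 \<le> c - k" "c - k \<le> m" using abc 3 by auto
    then have "k < h c" using right[of "c - k"] by auto
    ultimately show False using abc by auto
  qed
qed

lemma permutes_finiteI:
  assumes "finite S" "inj_on g S" "g ` S \<subseteq> S" "\<And>x. x \<notin> S \<Longrightarrow> g x = x"
  shows "g permutes S"
proof (rule bij_imp_permutes)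
  have "g ` S = S" using endo_inj_surj[of S g] assms by auto
  then show "bij_betw g S S" using assms(2) by (simp add: bij_betw_def)
qed (use assms in auto)

lemma permutes_preimage:
  assumes "p permutes S" "y \<in> S"
  shows "\<exists>x\<in>S. p x = y"
proof -
  have "y \<in> p ` S" using assms by (simp add: permutes_image)
  then show ?thesis by blast
qed

lemma permutes_rank:
  assumes perm: "p permutes {1..n::nat}" and b: "b \<in> {1..n}"
  shows "p b = card {c\<in>{1..n}. p c < p b} + 1"
proof -
  have image: "p ` {c\<in>{1..n}. p c < p b} = {1..<p b}"
  proof
    show "p ` {c\<in>{1..n}. p c < p b} \<subseteq> {1..<p b}"
    proof
      fix y assume "y \<in> p ` {c\<in>{1..n}. p c < p b}"
      then obtain c where "c \<in> {1..n}" "p c < p b" "y = p c" by auto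
      then show "y \<in> {1..<p b}" using permutes_in_seg[OF perm, of c] by auto
    qed
    show "{1..<p b} \<subseteq> p ` {c\<in>{1..n}. p c < p b}"
    proof
      fix y assume y: "y \<in> {1..<p b}"
      then have "y \<in> {1..n}" using permutes_in_seg[OF perm b] by auto
      then obtain x where "x \<in> {1..n}" "p x = y" using permutes_preimage[OF perm] by blast
      then show "y \<in> p ` {c\<in>{1..n}. p c < p b}" using y by auto
    qed
  qed
  have "card {c\<in>{1..n}. p c < p b} = card (p ` {c\<in>{1..n}. p c < p b})"
    by (rule card_image[OF permutes_inj_on[OF perm], symmetric])
  also have "\<dots> = card {1..<p b}" unfolding image ..
  finally have "card {c\<in>{1..n}. p c < p b} = card {1..<p b}" .
  then show ?thesis using permutes_in_seg[OF perm b] by simp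
qed

section \<open>Strongly 312-avoiding permutations ending in 1\<close>

definition end1_perm :: "nat \<Rightarrow> nat \<Rightarrow> nat \<Rightarrow> nat" where
  "end1_perm n j i =
     (if 1 \<le> i \<and> i \<le> j then n - j + i else if j < i \<and> i \<le> n then n + 1 - i else i)"

lemma end1_perm_permutes: "1 \<le> j \<Longrightarrow> j \<le> n \<Longrightarrow> end1_perm n j permutes {1..n}"
  by (rule permutes_finiteI) (auto simp: end1_perm_def inj_on_def split: if_splits)

lemma end1_perm_last: "1 \<le> j \<Longrightarrow> j < n \<Longrightarrow> end1_perm n j n = 1"
  by (simp add: end1_perm_def)

lemma end1_perm_square:
  "1 \<le> j \<Longrightarrow> 2 * j \<le> n \<Longrightarrow> 1 \<le> i \<Longrightarrow> i \<le> n \<Longrightarrow>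
    end1_perm n j (end1_perm n j i) =
      (if i \<le> j then j + 1 - i else if i \<le> n - j then i else 2 * n - j + 1 - i)"
  by (auto simp: end1_perm_def)

lemma end1_perm_avoids_312: "1 \<le> j \<Longrightarrow> 2 * j \<le> n \<Longrightarrow> avoids_312 (end1_perm n j) n"
  unfolding avoids_312_def by (auto simp: end1_perm_def split: if_splits)

lemma end1_perm_square_avoids_312:
  assumes "1 \<le> j" "2 * j \<le> n"
  shows "avoids_312 (end1_perm n j \<circ> end1_perm n j) n"
  unfolding avoids_312_def
proof (intro allI impI notI)
  fix a b c assume abc: "1 \<le> a" "a < b" "b < c" "c \<le> n"
    "(end1_perm n j \<circ> end1_perm n j) b < (end1_perm n j \<circ> end1_perm n j) c \<and>
     (end1_perm n j \<circ> end1_perm n j) c < (end1_perm n j \<circ> end1_perm n j) a"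
  then show False using assms by (auto simp: end1_perm_square split: if_splits)
qed

locale strongly_312_ending_in_1 =
  fixes p :: "nat \<Rightarrow> nat" and n :: nat
  assumes perm: "p permutes {1..n}" and two_le_n: "2 \<le> n" and ends_in_1: "p n = 1"
    and avoids: "avoids_312 p n" and avoids_square: "avoids_312 (p \<circ> p) n"
begin

definition peak :: nat where
  "peak = inv p n"

lemma inj: "p a = p b \<Longrightarrow> a = b"
  using injD[OF permutes_inj[OF perm]] .

lemma bounds: "1 \<le> a \<Longrightarrow> a \<le> n \<Longrightarrow> 1 \<le> p a \<and> p a \<le> n"
  using permutes_in_seg[OF perm] by simp

lemma peak_bounds: "1 \<le> peak" "peak < n" "p peak = n"
proof -
  show p_peak: "p peak = n" unfolding peak_def by (rule permutes_inverses(1)[OF perm])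
  then have "peak \<in> {1..n}" using permutes_in_image[OF perm, of peak] two_le_n by simp
  moreover have "peak \<noteq> n" using p_peak ends_in_1 two_le_n by auto
  ultimately show "1 \<le> peak" "peak < n" by auto
qed

lemma two_le_p_1: "2 \<le> p 1"
  using inj[of 1 n] ends_in_1 two_le_n bounds[of 1] by force

lemma decreasing_after_peak:
  assumes ab: "peak < a" "a < b" "b \<le> n"
  shows "p b < p a"
proof -
  have "p b \<noteq> p a" using inj ab by force
  moreover have "p b < n" using bounds[of b] ab peak_bounds inj[of b peak] by force
  moreover have "\<not> p a < p b"
    using avoids_312D[OF avoids, of peak a b] ab peak_bounds \<open>p b < n\<close> by auto
  ultimately show "p b < p a" by linarith
qed

lemma two_le_square:
  assumes a: "1 \<le> a" "a \<le> n" "a \<noteq> peak"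
  shows "2 \<le> p (p a)"
proof -
  have "p (p a) \<noteq> 1"
  proof
    assume "p (p a) = 1"
    then have "p a = n" using inj ends_in_1 by metis
    then show False using inj peak_bounds a by metis
  qed
  moreover have "1 \<le> p (p a)" using bounds[of a] bounds[of "p a"] a by auto
  ultimately show "2 \<le> p (p a)" by linarith
qed

lemma square_before_peak:
  assumes a: "1 \<le> a" "a < peak"
  shows "p (p a) < p 1"
proof -
  have "p (p a) \<noteq> p 1"
  proof
    assume "p (p a) = p 1"
    then have "p a = 1" using inj by blast
    then have "a = n" using inj ends_in_1 by metis
    then show False using a peak_bounds by auto
  qed
  moreover have "\<not> p 1 < p (p a)"
    using avoids_312D[OF avoids_square, of a peak n] a peak_bounds ends_in_1 two_le_p_1 by auto
  ultimately show "p (p a) < p 1" by linarith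
qed

text \<open>The squares of the first peak - 1 entries are distinct values in {2..<p 1}.\<close>

lemma peak_less_p_1: "peak < p 1"
proof (cases "peak = 1")
  case True
  then show ?thesis using two_le_p_1 by simp
next
  case False
  have "inj_on (\<lambda>a. p (p a)) {1..<peak}" by (rule inj_onI) (use inj in blast)
  moreover have "(\<lambda>a. p (p a)) ` {1..<peak} \<subseteq> {2..<p 1}"
    using square_before_peak two_le_square peak_bounds by auto
  ultimately have "card {1..<peak} \<le> card {2..<p 1}" by (rule card_inj_on_le) auto
  then have "peak - 1 \<le> p 1 - 2" by simp
  then show ?thesis using False peak_bounds(1) two_le_p_1 by linarith
qed

lemma decreasing_below_p_1:
  assumes ab: "1 < a" "a < b" "b \<le> n" "p a < p 1" "p b < p 1"
  shows "p b < p a"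
proof -
  have "p b \<noteq> p a" using inj ab by force
  moreover have "\<not> p a < p b" using avoids_312D[OF avoids, of 1 a b] ab by auto
  ultimately show "p b < p a" by linarith
qed

lemma after_peak_below_p_1:
  assumes b: "peak < b" "b \<le> n"
  shows "p b < p 1"
proof -
  have next_below: "p (peak + 1) < p 1"
    \<comment> \<open>otherwise positions 1, peak, peak + 1 carry a 312 in p \<circ> p\<close>
  proof (rule ccontr)
    assume "\<not> p (peak + 1) < p 1"
    moreover have "p (peak + 1) \<noteq> p 1" using inj[of "peak + 1" 1] peak_bounds by auto
    ultimately have above: "p 1 < p (peak + 1)" by simp
    have le_n: "p (peak + 1) \<le> n" using bounds[of "peak + 1"] peak_bounds by auto
    have "peak \<noteq> 1" using above le_n peak_bounds by auto
    moreover have "p (p (peak + 1)) < p (p 1)"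
      using decreasing_after_peak[of "p 1" "p (peak + 1)"] peak_less_p_1 above le_n by auto
    moreover have "2 \<le> p (p (peak + 1))" using two_le_square[of "peak + 1"] peak_bounds by auto
    ultimately show False
      using avoids_312D[OF avoids_square, of 1 peak "peak + 1"] peak_bounds ends_in_1 by auto
  qed
  show "p b < p 1"
  proof (cases "b = peak + 1")
    case False
    then have "p b < p (peak + 1)" using decreasing_after_peak[of "peak + 1" b] b by auto
    then show ?thesis using next_below by simp
  qed (use next_below in simp)
qed

lemma after_peak_below_before:
  assumes ab: "1 \<le> a" "a \<le> peak" "peak < b" "b \<le> n"
  shows "p b < p a"
proof -
  have "a = 1 \<or> p a \<noteq> p 1" using inj[of a 1] by blast
  then consider "a = peak" | "a = 1" | "1 < a" "a < peak" "p 1 < p a" | "1 < a" "a < peak" "p a < p 1"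
    using ab by linarith
  then show ?thesis
  proof cases
    case 1
    then show ?thesis using bounds[of b] ab inj[of b peak] peak_bounds by force
  next
    case 2
    then show ?thesis using after_peak_below_p_1 ab by simp
  next
    case 3
    then show ?thesis using after_peak_below_p_1[OF ab(3,4)] by simp
  next
    case 4
    then show ?thesis using decreasing_below_p_1[of a b] after_peak_below_p_1[OF ab(3,4)] ab by auto
  qed
qed

lemma after_peak_eq:
  assumes b: "peak < b" "b \<le> n"
  shows "p b = n + 1 - b"
proof -
  have "{c\<in>{1..n}. p c < p b} = {b<..n}"
  proof (intro set_eqI iffI)
    fix c assume c: "c \<in> {c\<in>{1..n}. p c < p b}"
    consider "c \<le> peak" | "peak < c" "c < b" | "b \<le> c" by linarith
    then show "c \<in> {b<..n}"
    proof cases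
      case 1 then show ?thesis using after_peak_below_before[of c b] c b by auto
    next
      case 2 then show ?thesis using decreasing_after_peak[of c b] c b by auto
    next
      case 3 then show ?thesis using c by (cases "c = b") auto
    qed
  next
    fix c assume "c \<in> {b<..n}"
    then show "c \<in> {c\<in>{1..n}. p c < p b}" using decreasing_after_peak[of b c] b by auto
  qed
  then show "p b = n + 1 - b" using permutes_rank[OF perm, of b] b peak_bounds by auto
qed

text \<open>Otherwise the value peak occurs neither after the peak (values there are n + 1 - a < peak)
  nor before it (p (p a) = n would be below p 1).\<close>

lemma double_peak_le: "2 * peak \<le> n"
proof (rule ccontr)
  assume "\<not> 2 * peak \<le> n"
  obtain a where a: "a \<in> {1..n}" "p a = peak" using permutes_preimage[OF perm, of peak] peak_bounds by auto
  consider "peak < a" | "a = peak" | "a < peak" by linarith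
  then show False
  proof cases
    case 1 then show False using after_peak_eq[of a] a \<open>\<not> 2 * peak \<le> n\<close> by auto
  next
    case 2 then show False using a peak_bounds by auto
  next
    case 3 then show False using square_before_peak[of a] a peak_bounds two_le_p_1 bounds[of 1] by auto
  qed
qed

lemma increasing_before_peak:
  assumes aa': "1 \<le> a" "a < a'" "a' \<le> peak"
  shows "p a < p a'"
proof -
  have pa_less: "p a < n" using bounds[of a] aa' peak_bounds inj[of a peak] by force
  show "p a < p a'"
  proof (cases "a' = peak")
    case True then show ?thesis using pa_less peak_bounds by simp
  next
    case False
    \<comment> \<open>the decreasing suffix maps u < v < w to peak, a', a, so p a' < p a gives a 312 in p \<circ> p\<close>
    define u v w where "u = n + 1 - peak" and "v = n + 1 - a'" and "w = n + 1 - a"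
    have uvw: "peak < u" "u < v" "v < w" "w \<le> n"
      using double_peak_le aa' False peak_bounds unfolding u_def v_def w_def by auto
    have "p u = peak" "p v = a'" "p w = a"
      using after_peak_eq[of u] after_peak_eq[of v] after_peak_eq[of w] uvw
      unfolding u_def v_def w_def by auto
    then have "\<not> p a' < p a"
      using avoids_312D[OF avoids_square, of u v w] uvw peak_bounds pa_less by auto
    moreover have "p a \<noteq> p a'" using inj aa' by force
    ultimately show ?thesis by linarith
  qed
qed

lemma before_peak_eq:
  assumes a: "1 \<le> a" "a \<le> peak"
  shows "p a = n - peak + a"
proof -
  have "{c\<in>{1..n}. p c < p a} = {1..<a} \<union> {peak<..n}"
  proof (intro set_eqI iffI)
    fix c assume c: "c \<in> {c\<in>{1..n}. p c < p a}"
    show "c \<in> {1..<a} \<union> {peak<..n}"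
    proof (rule ccontr)
      assume "c \<notin> {1..<a} \<union> {peak<..n}"
      then have "a \<le> c" "c \<le> peak" using c by auto
      then show False using increasing_before_peak[of a c] c a by (cases "c = a") auto
    qed
  next
    fix c assume "c \<in> {1..<a} \<union> {peak<..n}"
    then show "c \<in> {c\<in>{1..n}. p c < p a}"
      using increasing_before_peak[of c a] after_peak_below_before[of a c] a peak_bounds by auto
  qed
  moreover have "card ({1..<a} \<union> {peak<..n}) = (a - 1) + (n - peak)"
    by (subst card_Un_disjoint) (use a in auto)
  ultimately show "p a = n - peak + a" using permutes_rank[OF perm, of a] a peak_bounds by auto
qed

lemma eq_end1_perm: "p = end1_perm n peak"
proof
  fix i
  show "p i = end1_perm n peak i"
  proof (cases "1 \<le> i \<and> i \<le> n")
    case True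
    then show ?thesis using before_peak_eq[of i] after_peak_eq[of i] by (auto simp: end1_perm_def)
  next
    case False
    then show ?thesis using permutes_not_in[OF perm, of i] by (auto simp: end1_perm_def)
  qed
qed

end

definition strong_312 :: "nat \<Rightarrow> (nat \<Rightarrow> nat) set" where
  "strong_312 n = {p. p permutes {1..n} \<and> avoids_312 p n \<and> avoids_312 (p \<circ> p) n}"

definition strong_312_end1 :: "nat \<Rightarrow> (nat \<Rightarrow> nat) set" where
  "strong_312_end1 n = {p \<in> strong_312 n. p n = 1}"

lemma Sav_pat312_eq: "Sav n pat312 3 = card (strong_312 n)"
  by (simp add: Sav_def strong_312_def strongly_avoids_pat312_iff)

lemma Sav_end1_pat312_eq: "Sav_end1 n pat312 3 = card (strong_312_end1 n)"
  by (simp add: Sav_end1_def strong_312_end1_def strong_312_def strongly_avoids_pat312_iff)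

lemma strong_312_end1_eq:
  assumes "2 \<le> n"
  shows "strong_312_end1 n = end1_perm n ` {1..n div 2}"
proof
  show "strong_312_end1 n \<subseteq> end1_perm n ` {1..n div 2}"
  proof
    fix p assume "p \<in> strong_312_end1 n"
    then interpret strongly_312_ending_in_1 p n
      using assms by unfold_locales (auto simp: strong_312_end1_def strong_312_def)
    show "p \<in> end1_perm n ` {1..n div 2}"
      using eq_end1_perm peak_bounds double_peak_le by auto
  qed
  show "end1_perm n ` {1..n div 2} \<subseteq> strong_312_end1 n"
    using end1_perm_permutes end1_perm_last end1_perm_avoids_312 end1_perm_square_avoids_312
    by (auto simp: strong_312_end1_def strong_312_def)
qed

lemma card_strong_312_end1:
  assumes "1 \<le> n"
  shows "card (strong_312_end1 n) = (if n = 1 then 1 else n div 2)"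
proof (cases "n = 1")
  case True
  have "strong_312_end1 1 = {id}"
  proof
    show "strong_312_end1 1 \<subseteq> {id}"
    proof
      fix p assume "p \<in> strong_312_end1 1"
      then have perm: "p permutes {1..1}" and "p 1 = 1"
        by (auto simp: strong_312_end1_def strong_312_def)
      then have "p = id" using permutes_not_in[OF perm] by (metis atLeastAtMost_singleton eq_id_iff singletonD)
      then show "p \<in> {id}" by simp
    qed
  qed (auto simp: strong_312_end1_def strong_312_def avoids_312_def)
  then show ?thesis using True by simp
next
  case False
  have "inj_on (end1_perm n) {1..n div 2}"
  proof (rule inj_onI)
    fix j j' assume "j \<in> {1..n div 2}" "j' \<in> {1..n div 2}" "end1_perm n j = end1_perm n j'"
    then have "n - j + 1 = n - j' + 1" "j \<le> n" "j' \<le> n"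
      by (auto simp: end1_perm_def dest: fun_cong[of _ _ 1])
    then show "j = j'" by linarith
  qed
  then show ?thesis using strong_312_end1_eq[of n] assms False by (simp add: card_image)
qed

section \<open>Splitting at the entry 1\<close>

definition direct_sum :: "nat \<Rightarrow> nat \<Rightarrow> (nat \<Rightarrow> nat) \<Rightarrow> (nat \<Rightarrow> nat) \<Rightarrow> nat \<Rightarrow> nat" where
  "direct_sum n k q r i = (if i \<le> k then q i else if i \<le> n then r (i - k) + k else i)"

definition prefix_part :: "nat \<Rightarrow> (nat \<Rightarrow> nat) \<Rightarrow> nat \<Rightarrow> nat" where
  "prefix_part k p i = (if i \<le> k then p i else i)"

definition suffix_part :: "nat \<Rightarrow> nat \<Rightarrow> (nat \<Rightarrow> nat) \<Rightarrow> nat \<Rightarrow> nat" where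
  "suffix_part n k p i = (if 1 \<le> i \<and> i \<le> n - k then p (i + k) - k else i)"

lemma direct_sum_permutes:
  assumes q: "q permutes {1..k}" and r: "r permutes {1..n - k}" and "k \<le> n"
  shows "direct_sum n k q r permutes {1..n}"
proof (rule permutes_finiteI)
  have q_in: "\<And>i. 1 \<le> i \<Longrightarrow> i \<le> k \<Longrightarrow> 1 \<le> q i \<and> q i \<le> k"
    and r_in: "\<And>i. 1 \<le> i \<Longrightarrow> i \<le> n - k \<Longrightarrow> 1 \<le> r i \<and> r i \<le> n - k"
    using permutes_in_seg[OF q] permutes_in_seg[OF r] by auto
  show "inj_on (direct_sum n k q r) {1..n}"
  proof (rule inj_onI)
    fix x y assume xy: "x \<in> {1..n}" "y \<in> {1..n}" "direct_sum n k q r x = direct_sum n k q r y"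
    consider "x \<le> k" "y \<le> k" | "x \<le> k" "k < y" | "k < x" "y \<le> k" | "k < x" "k < y" by linarith
    then show "x = y"
    proof cases
      case 1 then show ?thesis using xy injD[OF permutes_inj[OF q]] by (auto simp: direct_sum_def)
    next
      case 2
      then have "q x \<le> k" "1 \<le> r (y - k)" using xy q_in[of x] r_in[of "y - k"] by auto
      then show ?thesis using xy 2 by (simp add: direct_sum_def)
    next
      case 3
      then have "q y \<le> k" "1 \<le> r (x - k)" using xy q_in[of y] r_in[of "x - k"] by auto
      then show ?thesis using xy 3 by (simp add: direct_sum_def)
    next
      case 4
      then have "r (x - k) = r (y - k)" using xy by (auto simp: direct_sum_def)
      then show ?thesis using 4 injD[OF permutes_inj[OF r]] by fastforce
    qed
  qed
  show "direct_sum n k q r ` {1..n} \<subseteq> {1..n}"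
  proof
    fix y assume "y \<in> direct_sum n k q r ` {1..n}"
    then obtain x where x: "x \<in> {1..n}" "y = direct_sum n k q r x" by auto
    show "y \<in> {1..n}"
    proof (cases "x \<le> k")
      case True then show ?thesis using x q_in[of x] \<open>k \<le> n\<close> by (auto simp: direct_sum_def)
    next
      case False
      then have "1 \<le> r (x - k)" "r (x - k) \<le> n - k" using x r_in[of "x - k"] by auto
      then show ?thesis using x False by (auto simp: direct_sum_def)
    qed
  qed
  show "direct_sum n k q r x = x" if "x \<notin> {1..n}" for x
    using that permutes_not_in[OF q, of 0] \<open>k \<le> n\<close> by (cases "x = 0") (auto simp: direct_sum_def)
qed simp

lemma direct_sum_avoids_312:
  assumes q: "q permutes {1..k}" and r: "r permutes {1..n - k}" and "k \<le> n"
    and "avoids_312 q k" "avoids_312 r (n - k)"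
    and "avoids_312 (q \<circ> q) k" "avoids_312 (r \<circ> r) (n - k)"
  shows "avoids_312 (direct_sum n k q r) n"
    and "avoids_312 (direct_sum n k q r \<circ> direct_sum n k q r) n"
proof -
  have q_in: "\<And>i. 1 \<le> i \<Longrightarrow> i \<le> k \<Longrightarrow> 1 \<le> q i \<and> q i \<le> k"
    and r_in: "\<And>i. 1 \<le> i \<Longrightarrow> i \<le> n - k \<Longrightarrow> 1 \<le> r i \<and> r i \<le> n - k"
    using permutes_in_seg[OF q] permutes_in_seg[OF r] by auto
  have n_eq: "n = k + (n - k)" using \<open>k \<le> n\<close> by simp
  have "avoids_312 (direct_sum n k q r) (k + (n - k))"
    by (rule avoids_312_direct_sum[OF assms(4,5)]) (use q_in r_in in \<open>auto simp: direct_sum_def\<close>)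
  then show "avoids_312 (direct_sum n k q r) n" using n_eq by simp
  have "avoids_312 (direct_sum n k q r \<circ> direct_sum n k q r) (k + (n - k))"
  proof (rule avoids_312_direct_sum[OF assms(6,7)])
    fix i assume "1 \<le> i" "i \<le> k"
    then show "(direct_sum n k q r \<circ> direct_sum n k q r) i = (q \<circ> q) i \<and> (q \<circ> q) i \<le> k"
      using q_in[of i] q_in[of "q i"] by (auto simp: direct_sum_def)
  next
    fix i assume "1 \<le> i" "i \<le> n - k"
    then show "(direct_sum n k q r \<circ> direct_sum n k q r) (i + k) = (r \<circ> r) i + k \<and> 1 \<le> (r \<circ> r) i"
      using r_in[of i] r_in[of "r i"] by (auto simp: direct_sum_def)
  qed
  then show "avoids_312 (direct_sum n k q r \<circ> direct_sum n k q r) n" using n_eq by simp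
qed

lemma direct_sum_mem:
  assumes "q \<in> strong_312_end1 k" "r \<in> strong_312 (n - k)" "k \<le> n"
  shows "direct_sum n k q r \<in> strong_312 n" "direct_sum n k q r k = 1"
  using assms direct_sum_permutes[of q k r n] direct_sum_avoids_312[of q k r n]
  by (auto simp: strong_312_end1_def strong_312_def direct_sum_def)

lemma prefix_part_direct_sum: "q permutes {1..k} \<Longrightarrow> prefix_part k (direct_sum n k q r) = q"
  by (auto simp: fun_eq_iff prefix_part_def direct_sum_def dest: permutes_not_in)

lemma suffix_part_direct_sum: "r permutes {1..n - k} \<Longrightarrow> suffix_part n k (direct_sum n k q r) = r"
  by (auto simp: fun_eq_iff suffix_part_def direct_sum_def dest: permutes_not_in)

locale strongly_312_one_at =
  fixes p :: "nat \<Rightarrow> nat" and n k :: nat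
  assumes mem: "p \<in> strong_312 n" and k: "1 \<le> k" "k \<le> n" and one_at_k: "p k = 1"
begin

lemma perm: "p permutes {1..n}" and avoids: "avoids_312 p n"
  and avoids_square: "avoids_312 (p \<circ> p) n"
  using mem by (auto simp: strong_312_def)

lemma bounds: "1 \<le> a \<Longrightarrow> a \<le> n \<Longrightarrow> 1 \<le> p a \<and> p a \<le> n"
  using permutes_in_seg[OF perm] by simp

lemma before_less_after:
  assumes ab: "1 \<le> a" "a < k" "k < b" "b \<le> n"
  shows "p a < p b"
proof -
  have "p a \<noteq> p b" using injD[OF permutes_inj[OF perm]] ab by force
  moreover have "1 < p b" using injD[OF permutes_inj[OF perm], of b k] one_at_k ab bounds[of b]
    by force
  ultimately show "p a < p b"
    using avoids_312D[OF avoids, of a k b] ab one_at_k by force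
qed

text \<open>The n - k values after position k all exceed p a, which forces p a \<le> k.\<close>

lemma before_le_k: "1 \<le> a \<Longrightarrow> a \<le> k \<Longrightarrow> p a \<le> k"
proof (rule ccontr)
  assume a: "1 \<le> a" "a \<le> k" "\<not> p a \<le> k"
  then have "a < k" using one_at_k by (cases "a = k") auto
  have "inj_on p {k<..n}" by (rule permutes_inj_on[OF perm])
  moreover have "p ` {k<..n} \<subseteq> {p a<..n}" using before_less_after[of a] a \<open>a < k\<close> bounds by force
  ultimately have "card {k<..n} \<le> card {p a<..n}" by (rule card_inj_on_le) auto
  then show False using a bounds[of a] k by auto
qed

lemma after_gt_k: "k < b \<Longrightarrow> b \<le> n \<Longrightarrow> k < p b"
proof (rule ccontr)
  have "p ` {1..k} \<subseteq> {1..k}" using before_le_k bounds k by auto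
  then have image: "p ` {1..k} = {1..k}"
    using endo_inj_surj[of "{1..k}" p] permutes_inj_on[OF perm] by auto
  assume b: "k < b" "b \<le> n" "\<not> k < p b"
  then have "p b \<in> p ` {1..k}" using image bounds[of b] by auto
  then show False using injD[OF permutes_inj[OF perm]] b by force
qed

lemma suffix_part_shift:
  assumes "1 \<le> i" "i \<le> n - k"
  shows "suffix_part n k p i + k = p (i + k) \<and> suffix_part n k p i \<in> {1..n - k}"
proof -
  have "k < p (i + k)" "p (i + k) \<le> n"
    using after_gt_k[of "i + k"] bounds[of "i + k"] assms by auto
  then show ?thesis using assms by (auto simp: suffix_part_def)
qed

lemma prefix_part_mem: "prefix_part k p \<in> strong_312_end1 k"
proof -
  have "prefix_part k p permutes {1..k}"
  proof (rule permutes_finiteI)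
    show "inj_on (prefix_part k p) {1..k}"
      using permutes_inj_on[OF perm] by (auto simp: prefix_part_def inj_on_def)
    show "prefix_part k p ` {1..k} \<subseteq> {1..k}"
      using before_le_k bounds k by (auto simp: prefix_part_def)
    show "prefix_part k p x = x" if "x \<notin> {1..k}" for x
      using that permutes_not_in[OF perm, of 0] by (cases "x = 0") (auto simp: prefix_part_def)
  qed simp
  moreover have "avoids_312 (prefix_part k p) k"
    by (rule avoids_312_prefix[OF avoids k(2)]) (simp add: prefix_part_def)
  moreover have "avoids_312 (prefix_part k p \<circ> prefix_part k p) k"
    by (rule avoids_312_prefix[OF avoids_square k(2)])
      (use before_le_k bounds k in \<open>auto simp: prefix_part_def\<close>)
  ultimately show ?thesis
    using one_at_k by (simp add: strong_312_end1_def strong_312_def prefix_part_def)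
qed

lemma suffix_part_mem: "suffix_part n k p \<in> strong_312 (n - k)"
proof -
  note shift = suffix_part_shift
  have "suffix_part n k p permutes {1..n - k}"
  proof (rule permutes_finiteI)
    show "inj_on (suffix_part n k p) {1..n - k}"
    proof (rule inj_onI)
      fix x y assume "x \<in> {1..n - k}" "y \<in> {1..n - k}" "suffix_part n k p x = suffix_part n k p y"
      then have "p (x + k) = p (y + k)" using shift[of x] shift[of y] by force
      then show "x = y" using injD[OF permutes_inj[OF perm]] by force
    qed
    show "suffix_part n k p ` {1..n - k} \<subseteq> {1..n - k}" using shift by auto
  qed (auto simp: suffix_part_def)
  moreover have "avoids_312 (suffix_part n k p) (n - k)"
    by (rule avoids_312_shift[OF avoids]) (use shift in auto)
  moreover have "avoids_312 (suffix_part n k p \<circ> suffix_part n k p) (n - k)"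
  proof (rule avoids_312_shift[OF avoids_square])
    fix i assume "1 \<le> i" "i \<le> n - k"
    then show "(suffix_part n k p \<circ> suffix_part n k p) i + k = (p \<circ> p) (i + k)"
      using shift[of i] shift[of "suffix_part n k p i"] by auto
  qed
  ultimately show ?thesis by (simp add: strong_312_def)
qed

lemma direct_sum_parts: "direct_sum n k (prefix_part k p) (suffix_part n k p) = p"
proof
  fix i
  consider "i \<le> k" | "k < i" "i \<le> n" | "n < i" by linarith
  then show "direct_sum n k (prefix_part k p) (suffix_part n k p) i = p i"
  proof cases
    case 1 then show ?thesis by (simp add: direct_sum_def prefix_part_def)
  next
    case 2 then show ?thesis using suffix_part_shift[of "i - k"] by (simp add: direct_sum_def)
  next
    case 3 then show ?thesis using permutes_not_in[OF perm, of i] k by (simp add: direct_sum_def)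
  qed
qed

end

lemma card_strong_312_one_at:
  assumes k: "1 \<le> k" "k \<le> n"
  shows "card {p\<in>strong_312 n. p k = 1} = card (strong_312_end1 k) * card (strong_312 (n - k))"
proof -
  have "bij_betw (\<lambda>x. direct_sum n k (fst x) (snd x)) (strong_312_end1 k \<times> strong_312 (n - k))
          {p\<in>strong_312 n. p k = 1}"
    by (rule bij_betw_byWitness[where f' = "\<lambda>p. (prefix_part k p, suffix_part n k p)"])
      (use prefix_part_direct_sum suffix_part_direct_sum direct_sum_mem k
           strongly_312_one_at.direct_sum_parts strongly_312_one_at.prefix_part_mem
           strongly_312_one_at.suffix_part_mem
        in \<open>auto simp: strongly_312_one_at_def strong_312_end1_def strong_312_def\<close>)
  then have "card (strong_312_end1 k \<times> strong_312 (n - k)) = card {p\<in>strong_312 n. p k = 1}"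
    by (rule bij_betw_same_card)
  then show ?thesis by (simp add: card_cartesian_product)
qed

lemma card_strong_312_rec:
  assumes "1 \<le> n"
  shows "card (strong_312 n) = (\<Sum>k=1..n. card (strong_312_end1 k) * card (strong_312 (n - k)))"
proof -
  have finite: "finite (strong_312 n)"
    by (rule finite_subset[of _ "{p. p permutes {1..n}}"]) (auto simp: strong_312_def finite_permutations)
  have "strong_312 n = (\<Union>k\<in>{1..n}. {p\<in>strong_312 n. p k = 1})"
    using permutes_preimage[of _ "{1..n}" 1] assms by (auto simp: strong_312_def)
  then have "card (strong_312 n) = card (\<Union>k\<in>{1..n}. {p\<in>strong_312 n. p k = 1})" by simp
  also have "\<dots> = (\<Sum>k=1..n. card {p\<in>strong_312 n. p k = 1})"
  proof (rule card_UN_disjoint)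
    show "\<forall>i\<in>{1..n}. \<forall>j\<in>{1..n}. i \<noteq> j \<longrightarrow> {p\<in>strong_312 n. p i = 1} \<inter> {p\<in>strong_312 n. p j = 1} = {}"
      by (auto simp: strong_312_def) (metis injD permutes_inj)
  qed (use finite in auto)
  also have "\<dots> = (\<Sum>k=1..n. card (strong_312_end1 k) * card (strong_312 (n - k)))"
    by (rule sum.cong[OF refl], rule card_strong_312_one_at) auto
  finally show ?thesis .
qed

lemma card_strong_312_0: "card (strong_312 0) = 1"
proof -
  have "strong_312 0 = {id}" by (auto simp: strong_312_def avoids_312_def)
  then show ?thesis by simp
qed

section \<open>Generating functions\<close>

lemma fps_renewal_equation:
  fixes a b :: "nat \<Rightarrow> 'a::comm_ring_1"
  assumes "b 0 = 0" "a 0 = 1" "\<And>n. 1 \<le> n \<Longrightarrow> a n = (\<Sum>k=1..n. b k * a (n - k))"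
  shows "(1 - Abs_fps b) * Abs_fps a = 1"
proof (rule fps_ext)
  fix n
  show "((1 - Abs_fps b) * Abs_fps a) $ n = 1 $ n"
  proof (cases "n = 0")
    case False
    have "(Abs_fps b * Abs_fps a) $ n = (\<Sum>k=0..n. b k * a (n - k))" by (simp add: fps_mult_nth)
    also have "\<dots> = (\<Sum>k=1..n. b k * a (n - k))" using assms(1) by (simp add: sum.atLeast_Suc_atMost)
    also have "\<dots> = a n" using False assms(3) by simp
    finally show ?thesis using False by (simp add: algebra_simps)
  qed (simp add: assms)
qed

lemma fps_half_floor_mult:
  "(1 - fps_X ^ 2) * Abs_fps (\<lambda>n. of_nat (n div 2)) = (Abs_fps (\<lambda>n. if 2 \<le> n then 1 else 0) :: 'a::comm_ring_1 fps)"
proof (rule fps_ext)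
  fix n :: nat
  have "n div 2 = (n - 2) div 2 + 1" if "2 \<le> n" using that by (simp add: le_div_geq)
  then show "((1 - fps_X ^ 2) * Abs_fps (\<lambda>n. of_nat (n div 2))) $ n = Abs_fps (\<lambda>n. if 2 \<le> n then 1 else 0 :: 'a) $ n"
    by (auto simp: algebra_simps fps_X_power_mult_nth)
qed

lemma fps_tail_indicator_mult:
  "(1 - fps_X) * Abs_fps (\<lambda>n. if 2 \<le> n then 1 else 0) = (fps_X ^ 2 :: 'a::comm_ring_1 fps)"
  by (rule fps_ext) (auto simp: algebra_simps)

lemma fps_eq_divideI:
  fixes a b c :: "'a::field fps"
  assumes "a * b = c" "b $ 0 \<noteq> 0"
  shows "a = c / b"
proof -
  have "b \<noteq> 0" using assms(2) by auto
  then show ?thesis using nonzero_mult_div_cancel_right[of b a] assms(1) by simp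
qed

lemma Sav_end1_312_fps_closed:
  "Abs_fps (\<lambda>n. if n = 0 then 0 else if n = 1 then 1 else of_nat (n div 2))
     * ((fps_X - 1) ^ 2 * (fps_X + 1)) = (fps_X ^ 4 - fps_X ^ 3 + fps_X :: 'a::comm_ring_1 fps)"
proof -
  define h :: "'a fps" where "h = Abs_fps (\<lambda>n. of_nat (n div 2))"
  have "Abs_fps (\<lambda>n. if n = 0 then 0 else if n = 1 then 1 else of_nat (n div 2)) = fps_X + h"
    by (rule fps_ext) (auto simp: h_def)
  moreover have "(fps_X - 1) ^ 2 * (fps_X + 1) = (1 - fps_X) * (1 - fps_X ^ 2 :: 'a fps)"
    by (simp add: algebra_simps power2_eq_square)
  moreover have "(fps_X + h) * ((1 - fps_X) * (1 - fps_X ^ 2))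
      = fps_X * ((1 - fps_X) * (1 - fps_X ^ 2)) + (1 - fps_X) * ((1 - fps_X ^ 2) * h)"
    by (subst distrib_right) (simp only: mult_ac)
  moreover have "(1 - fps_X) * ((1 - fps_X ^ 2) * h) = fps_X ^ 2"
    unfolding h_def fps_half_floor_mult by (rule fps_tail_indicator_mult)
  moreover have "fps_X * ((1 - fps_X) * (1 - fps_X ^ 2)) + fps_X ^ 2
      = (fps_X ^ 4 - fps_X ^ 3 + fps_X :: 'a fps)"
    by (simp add: algebra_simps power2_eq_square power3_eq_cube power4_eq_xxxx)
  ultimately show ?thesis by simp
qed

theorem mainTheorem8:
  fixes B :: "rat fps"
  defines "B \<equiv> Abs_fps (\<lambda>n. if n = 0 then 0 else if n = 1 then 1 else of_nat (n div 2))"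
  shows "Abs_fps (\<lambda>n. of_nat (Sav n pat312 3) :: rat) =
           (fps_X ^ 2 + fps_X - 1 - fps_X ^ 3) / (fps_X ^ 4 - 2 * fps_X ^ 3 + fps_X ^ 2 + 2 * fps_X - 1)
       \<and> Abs_fps (\<lambda>n. of_nat (Sav n pat312 3) :: rat) = 1 / (1 - B)
       \<and> B = (fps_X ^ 4 - fps_X ^ 3 + fps_X) / ((fps_X - 1) ^ 2 * (fps_X + 1))
       \<and> B = Abs_fps (\<lambda>n. if n = 0 then 0 else of_nat (Sav_end1 n pat312 3))"
proof -
  define A where "A = Abs_fps (\<lambda>n. of_nat (Sav n pat312 3) :: rat)"
  define D :: "rat fps" where "D = (fps_X - 1) ^ 2 * (fps_X + 1)"
  have B_Sav_end1: "B = Abs_fps (\<lambda>n. if n = 0 then 0 else of_nat (Sav_end1 n pat312 3))"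
    by (rule fps_ext) (simp add: B_def Sav_end1_pat312_eq card_strong_312_end1)
  have renewal: "(1 - B) * A = 1"
    unfolding A_def B_Sav_end1 by (rule fps_renewal_equation)
      (simp_all add: Sav_pat312_eq Sav_end1_pat312_eq card_strong_312_0 card_strong_312_rec)
  have BD: "B * D = fps_X ^ 4 - fps_X ^ 3 + fps_X"
    unfolding B_def D_def by (rule Sav_end1_312_fps_closed)
  have "A * (B * D - D) = - (D * ((1 - B) * A))" by (simp add: algebra_simps)
  also have "\<dots> = fps_X ^ 2 + fps_X - 1 - fps_X ^ 3"
    unfolding renewal by (simp add: D_def algebra_simps power2_eq_square power3_eq_cube)
  also have "B * D - D = fps_X ^ 4 - 2 * fps_X ^ 3 + fps_X ^ 2 + 2 * fps_X - 1"
    unfolding BD by (simp add: D_def algebra_simps power2_eq_square power3_eq_cube)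
  finally have "A = (fps_X ^ 2 + fps_X - 1 - fps_X ^ 3) / (fps_X ^ 4 - 2 * fps_X ^ 3 + fps_X ^ 2 + 2 * fps_X - 1)"
    by (rule fps_eq_divideI) simp
  moreover have "A = 1 / (1 - B)"
    using renewal by (intro fps_eq_divideI) (simp_all add: mult.commute B_def)
  moreover have "B = (fps_X ^ 4 - fps_X ^ 3 + fps_X) / D"
    using BD by (rule fps_eq_divideI) (simp add: D_def)
  ultimately show ?thesis unfolding A_def D_def B_Sav_end1[symmetric] by blast
qed

end
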